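(* Let $F\in\mathbb{R}[x]$, $\delta\in\mathbb{R}$, and $Q=F\circ x^2\circ(x-\delta)$, with $n=\deg Q\ge6$. 1) If $Ch_2(Q)=Ch_3(Q)=0$, then either $\delta=0$ or $(2\delta)^2=\dfrac{3}{(n-1)(n-2)}$. 2) If $Ch_2(Q)=Ch_4(Q)=Ch_5(Q)=0$, then either $\delta=0$ or $t=2\delta$ satisfies $$\frac{2}{15}(n-1)(n-2)(n-3)(n-4)t^4-(n-2)(n-3)t^2+1=0.$$
   Context: $T_k$ denotes the Chebyshev polynomial of the first kind of degree $k$, $T_k(\cos\phi)=\cos(k\phi)$. Every real polynomial $Q$ of degree $n$ can be uniquely written as $Q=\sum_{k=0}^n d_kT_k$ with $d_k\in\mathbb{R}$; set $Ch_i(Q)=d_{n-i}$ for $0\le i\le n$. $\circ$ denotes composition, so $Q(x)=F((x-\delta)^2)$. *)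

theory Defs
  imports "HOL-Computational_Algebra.Polynomial"
begin

fun cheb :: "nat \<Rightarrow> real poly" where
  "cheb 0 = 1"
| "cheb (Suc 0) = [:0, 1:]"
| "cheb (Suc (Suc k)) = [:0, 2:] * cheb (Suc k) - cheb k"

definition cheb_coeff :: "real poly \<Rightarrow> nat \<Rightarrow> real" where
  "cheb_coeff Q = (THE d. (\<forall>k>degree Q. d k = 0) \<and>
                         Q = (\<Sum>k\<le>degree Q. smult (d k) (cheb k)))"

definition Ch :: "nat \<Rightarrow> real poly \<Rightarrow> real" where
  "Ch i Q = cheb_coeff Q (degree Q - i)"

end

theory Submission
  imports Defs
begin

(*
  Let Q = F((x - \<delta>)^2) have degree n = 2K, K = deg F, and write q_j = coeff Q (n - j).
  The proof describes the six top coefficients q_0, ..., q_5 in two ways and compares them.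

  After showing that the T_k form a basis, so that Ch is well defined,
  each q_j with j \<le> 5 becomes a combination of at most three Chebyshev coefficients,
  and the vanishing of Ch_2, Ch_3 (resp. Ch_2, Ch_4, Ch_5) turns into linear relations
  among q_0, ..., q_5.

  Composition side: expanding every (x + a)^(2i) binomially writes q_0, ..., q_5 through
  a = -\<delta> and the top coefficients f_0, f_1, f_2 of F.

  Substituting, eliminating f_1 and f_2 leaves f_0 a n (polynomial in a, n) = 0; since
  f_0 \<noteq> 0 this gives both claims, and the main theorem only assembles these pieces.
*)

section \<open>Coefficients of the Chebyshev polynomials\<close>

lemma degree_cheb_le: "degree (cheb k) \<le> k"
proof (induction k rule: cheb.induct)
  case (3 k)
  have "degree ([:0, 2:] * cheb (Suc k)) \<le> Suc (Suc k)"
    using degree_mult_le[of "[:0, 2::real:]" "cheb (Suc k)"] 3 by simp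
  then show ?case using 3 degree_diff_le by (metis cheb.simps(3) le_SucI)
qed auto

lemma coeff_cheb_above_degree: "k < m \<Longrightarrow> coeff (cheb k) m = 0"
  by (rule coeff_eq_0) (meson degree_cheb_le le_less_trans)

lemma coeff_mult_2x:
  fixes p :: "real poly"
  shows "coeff ([:0, 2:] * p) (Suc m) = 2 * coeff p m" and "coeff ([:0, 2:] * p) 0 = 0"
  by (simp_all add: coeff_pCons)

lemma coeff_cheb_leading: "coeff (cheb (Suc k)) (Suc k) = 2 ^ k"
proof (induction k rule: nat_less_induct)
  case (1 k)
  show ?case
  proof (cases k)
    case (Suc j)
    have "coeff (cheb j) (Suc (Suc j)) = 0" by (simp add: coeff_cheb_above_degree)
    then show ?thesis using 1 Suc by (simp add: coeff_mult_2x)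
  qed simp
qed

lemma coeff_cheb_diagonal: "1 \<le> m \<Longrightarrow> coeff (cheb m) m = 2 ^ m / 2"
  using coeff_cheb_leading[of "m - 1"] by (cases m) auto

lemma coeff_cheb_parity: "odd (k + m) \<Longrightarrow> coeff (cheb k) m = 0"
proof (induction k arbitrary: m rule: cheb.induct)
  case (3 k)
  then show ?case by (cases m) (simp_all add: coeff_mult_2x)
qed (auto simp: coeff_pCons split: nat.splits intro: odd_pos)

lemma coeff_cheb_second: "coeff (cheb (m + 2)) m = - real (m + 2) * 2 ^ m / 2"
proof (induction m)
  case (Suc m)
  have "cheb (Suc m + 2) = [:0, 2:] * cheb (m + 2) - cheb (Suc m)"
    by (simp add: numeral_eq_Suc)
  then have "coeff (cheb (Suc m + 2)) (Suc m) = 2 * coeff (cheb (m + 2)) m - coeff (cheb (Suc m)) (Suc m)"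
    by (simp only: coeff_diff coeff_mult_2x)
  then show ?case using Suc coeff_cheb_leading[of m] by (simp add: algebra_simps del: cheb.simps)
qed (simp add: numeral_eq_Suc)

lemma coeff_cheb_third: "coeff (cheb (m + 4)) m = real (m + 4) * real (m + 1) * 2 ^ m / 4"
proof (induction m)
  case (Suc m)
  have "cheb (Suc m + 4) = [:0, 2:] * cheb (m + 4) - cheb (Suc m + 2)"
    by (simp add: numeral_eq_Suc)
  then have "coeff (cheb (Suc m + 4)) (Suc m) = 2 * coeff (cheb (m + 4)) m - coeff (cheb (Suc m + 2)) (Suc m)"
    by (simp only: coeff_diff coeff_mult_2x)
  then show ?case using Suc coeff_cheb_second[of "Suc m"] by (simp add: algebra_simps del: cheb.simps)
qed (simp add: numeral_eq_Suc)

section \<open>The Chebyshev polynomials form a basis\<close>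

text \<open>Linear independence, read off from the top coefficient of a vanishing combination.\<close>
lemma cheb_combination_eq_0:
  assumes "(\<Sum>j\<le>N. smult (e j) (cheb j)) = 0" and "k \<le> N"
  shows "e k = 0"
  using assms
proof (induction N arbitrary: k)
  case (Suc N)
  have "(\<Sum>j\<le>N. e j * coeff (cheb j) (Suc N)) = 0"
    by (simp add: coeff_cheb_above_degree)
  moreover have "coeff (\<Sum>j\<le>Suc N. smult (e j) (cheb j)) (Suc N) = 0"
    using Suc.prems by simp
  ultimately have "e (Suc N) * coeff (cheb (Suc N)) (Suc N) = 0"
    by (simp add: coeff_sum)
  then have top: "e (Suc N) = 0" by (simp add: coeff_cheb_leading)
  then have "(\<Sum>j\<le>N. smult (e j) (cheb j)) = 0" using Suc.prems by simp
  then show ?case using Suc top by (cases "k = Suc N") auto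
qed simp

text \<open>Spanning: subtract a multiple of \<open>T_N\<close> to kill the top coefficient and recurse.\<close>
lemma cheb_combination_exists:
  fixes p :: "real poly"
  assumes "degree p \<le> N"
  shows "\<exists>d. (\<forall>k>N. d k = 0) \<and> p = (\<Sum>k\<le>N. smult (d k) (cheb k))"
  using assms
proof (induction N arbitrary: p)
  case 0
  then obtain c where p: "p = [:c:]" using degree0_coeffs by blast
  show ?case by (rule exI[of _ "\<lambda>k. if k = 0 then c else 0"]) (simp add: p)
next
  case (Suc N)
  define c where "c = coeff p (Suc N) / coeff (cheb (Suc N)) (Suc N)"
  define q where "q = p - smult c (cheb (Suc N))"
  have "degree q \<le> Suc N" unfolding q_def using Suc.prems degree_cheb_le[of "Suc N"]
    by (meson degree_diff_le degree_smult_le order_trans)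
  moreover have "coeff q (Suc N) = 0"
    unfolding q_def c_def by (simp add: coeff_cheb_leading)
  ultimately have "degree q \<le> N"
    by (metis le_SucE leading_coeff_0_iff degree_0 nat.distinct(1))
  then obtain d where d: "\<forall>k>N. d k = 0" "q = (\<Sum>k\<le>N. smult (d k) (cheb k))"
    using Suc.IH by blast
  have "p = (\<Sum>k\<le>Suc N. smult ((d(Suc N := c)) k) (cheb k))"
    using d(2) by (simp add: q_def)
  then show ?case using d(1) by (intro exI[of _ "d(Suc N := c)"]) auto
qed

lemma cheb_coeff_spec:
  fixes Q :: "real poly"
  shows "(\<forall>k>degree Q. cheb_coeff Q k = 0) \<and> Q = (\<Sum>k\<le>degree Q. smult (cheb_coeff Q k) (cheb k))"
proof -
  let ?P = "\<lambda>d. (\<forall>k>degree Q. d k = 0) \<and> Q = (\<Sum>k\<le>degree Q. smult (d k) (cheb k))"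
  obtain d where d: "?P d" using cheb_combination_exists[of Q "degree Q"] by auto
  have "d' = d" if d': "?P d'" for d'
  proof
    fix k
    have "(\<Sum>j\<le>degree Q. smult (d' j - d j) (cheb j)) = 0"
      using d d' by (simp add: smult_diff_left sum_subtractf)
    then show "d' k = d k"
      using cheb_combination_eq_0[of "\<lambda>j. d' j - d j" "degree Q" k] d d' by (cases "k \<le> degree Q") auto
  qed
  with d have "?P (THE d. ?P d)" by (rule theI)
  then show ?thesis unfolding cheb_coeff_def .
qed

lemma cheb_coeff_above_degree: "degree Q < k \<Longrightarrow> cheb_coeff Q k = 0"
  using cheb_coeff_spec by blast

text \<open>Near the top, a coefficient of \<open>Q\<close> involves only three Chebyshev coefficients,
  because \<open>T_(m+1), T_(m+3), T_(m+5)\<close> have the wrong parity and \<open>T_k\<close>, \<open>k < m\<close>, too small a degree.\<close>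
lemma coeff_by_cheb_coeff:
  fixes Q :: "real poly"
  assumes "1 \<le> m" and "degree Q \<le> m + 5"
  shows "coeff Q m = 2 ^ m / 2 * (cheb_coeff Q m - real (m + 2) * cheb_coeff Q (m + 2)
           + real (m + 4) * real (m + 1) / 2 * cheb_coeff Q (m + 4))"
proof -
  define g where "g k = cheb_coeff Q k * coeff (cheb k) m" for k
  have "coeff Q m = (\<Sum>k\<le>degree Q. g k)"
    using arg_cong[OF conjunct2[OF cheb_coeff_spec[of Q]], of "\<lambda>p. coeff p m"]
    by (simp add: coeff_sum g_def)
  also have "\<dots> = (\<Sum>k\<le>m + 5. g k)"
    by (rule sum.mono_neutral_left) (auto simp: g_def cheb_coeff_above_degree assms(2))
  also have "\<dots> = (\<Sum>k<m. g k) + g m + g (m + 1) + g (m + 2) + g (m + 3) + g (m + 4) + g (m + 5)"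
    by (simp add: numeral_eq_Suc sum.lessThan_Suc lessThan_Suc_atMost[symmetric] add.assoc)
  also have "(\<Sum>k<m. g k) = 0"
    by (simp add: g_def coeff_cheb_above_degree)
  also have "g (m + 1) = 0" by (simp add: g_def coeff_cheb_parity)
  also have "g (m + 3) = 0" by (simp add: g_def coeff_cheb_parity)
  also have "g (m + 5) = 0" by (simp add: g_def coeff_cheb_parity)
  also have "g m = cheb_coeff Q m * 2 ^ m / 2"
    using assms(1) by (simp add: g_def coeff_cheb_diagonal)
  also have "g (m + 2) = - cheb_coeff Q (m + 2) * real (m + 2) * 2 ^ m / 2"
    unfolding g_def coeff_cheb_second by (simp add: algebra_simps)
  also have "g (m + 4) = cheb_coeff Q (m + 4) * real (m + 4) * real (m + 1) * 2 ^ m / 4"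
    unfolding g_def coeff_cheb_third by simp
  finally show ?thesis by (simp add: field_simps)
qed

lemma top_coeff_relations:
  fixes Q :: "real poly"
  assumes deg: "degree Q = N" and "6 \<le> N"
  defines "n \<equiv> real N"
  shows "Ch 2 Q = 0 \<Longrightarrow> coeff Q (N - 2) = - n / 4 * coeff Q N"
    and "Ch 3 Q = 0 \<Longrightarrow> coeff Q (N - 3) = - (n - 1) / 4 * coeff Q (N - 1)"
    and "Ch 2 Q = 0 \<Longrightarrow> Ch 4 Q = 0 \<Longrightarrow> coeff Q (N - 4) = n * (n - 3) / 32 * coeff Q N"
    and "Ch 5 Q = 0 \<Longrightarrow>
           coeff Q (N - 5) = - (n - 3) / 4 * coeff Q (N - 3) - (n - 1) * (n - 2) / 32 * coeff Q (N - 1)"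
proof -
  obtain k where N: "N = k + 6" using \<open>6 \<le> N\<close> by (metis add.commute le_Suc_ex)
  define d where "d j = cheb_coeff Q (k + j)" for j
  have Ch: "Ch i Q = d (6 - i)" if "i \<le> 6" for i
    using that by (simp add: Ch_def d_def deg N)
  have vanish: "cheb_coeff Q (k + j) = 0" if "6 < j" for j
    using that by (simp add: cheb_coeff_above_degree deg N)
  have q_by_d: "coeff Q (k + j) = 2 ^ k * 2 ^ j / 2 * (d j - real (k + j + 2) * d (j + 2)
             + real (k + j + 4) * real (k + j + 1) / 2 * d (j + 4))" if "1 \<le> j" "j \<le> 6" for j
    using coeff_by_cheb_coeff[of "k + j" Q] that
    by (simp add: deg N d_def power_add add.assoc)
  have q0: "coeff Q N = 2 ^ k * 32 * d 6" using q_by_d[of 6] vanish by (simp add: N d_def)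
  have q1: "coeff Q (N - 1) = 2 ^ k * 16 * d 5" using q_by_d[of 5] vanish by (simp add: N d_def algebra_simps)
  have q2: "coeff Q (N - 2) = 2 ^ k * 8 * (d 4 - n * d 6)"
    using q_by_d[of 4] vanish by (simp add: N n_def d_def algebra_simps)
  have q3: "coeff Q (N - 3) = 2 ^ k * 4 * (d 3 - (n - 1) * d 5)"
    using q_by_d[of 3] vanish by (simp add: N n_def d_def algebra_simps)
  have q4: "coeff Q (N - 4) = 2 ^ k * 2 * (d 2 - (n - 2) * d 4 + n * (n - 3) / 2 * d 6)"
    using q_by_d[of 2] by (simp add: N n_def algebra_simps)
  have q5: "coeff Q (N - 5) = 2 ^ k * (d 1 - (n - 3) * d 3 + (n - 1) * (n - 4) / 2 * d 5)"
  proof -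
    have idx: "d (1 + 2) = d 3" "d (1 + 4) = d 5" by (simp_all only: one_plus_numeral semiring_norm)
    have q_k1: "coeff Q (k + 1) = 2 ^ k * (d 1 - real (k + 3) * d 3 + real (k + 5) * real (k + 2) / 2 * d 5)"
      using q_by_d[of 1, unfolded idx] by (simp add: add.commute)
    have e1: "N - 5 = k + 1" by (simp add: N)
    have e2: "n - 3 = real (k + 3)" by (simp add: N n_def)
    have e3: "n - 1 = real (k + 5)" by (simp add: N n_def)
    have e4: "n - 4 = real (k + 2)" by (simp add: N n_def)
    show ?thesis unfolding e1 e2 e3 e4 by (fact q_k1)
  qed
  show "coeff Q (N - 2) = - n / 4 * coeff Q N" if "Ch 2 Q = 0"
  proof -
    have "d 4 = 0" using that Ch[of 2] by simp
    then show ?thesis unfolding q2 q0 by (simp add: algebra_simps)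
  qed
  show "coeff Q (N - 3) = - (n - 1) / 4 * coeff Q (N - 1)" if "Ch 3 Q = 0"
  proof -
    have "d 3 = 0" using that Ch[of 3] by simp
    then show ?thesis unfolding q3 q1 by (simp add: algebra_simps)
  qed
  show "coeff Q (N - 4) = n * (n - 3) / 32 * coeff Q N" if "Ch 2 Q = 0" and "Ch 4 Q = 0"
  proof -
    have "d 4 = 0" "d 2 = 0" using that Ch[of 2] Ch[of 4] by simp_all
    then show ?thesis unfolding q4 q0 by (simp add: field_simps)
  qed
  show "coeff Q (N - 5) = - (n - 3) / 4 * coeff Q (N - 3) - (n - 1) * (n - 2) / 32 * coeff Q (N - 1)"
    if "Ch 5 Q = 0"
  proof -
    have "d 1 = 0" using that Ch[of 5] by simp
    then show ?thesis unfolding q5 q3 q1 by (simp add: field_simps)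
  qed
qed

section \<open>Top coefficients of \<open>F((x + a)^2)\<close>\<close>

lemma pcompose_monom: "pcompose (monom c i) q = smult c (q ^ i)"
  by (induction i) (simp_all add: monom_Suc pcompose_pCons monom_0)

text \<open>Binomial theorem for \<open>(x + a)^p\<close>, valid for every index \<open>m\<close>.\<close>
lemma coeff_linear_power_choose: "coeff ([:a, 1:] ^ p) m = real (p choose m) * a ^ (p - m)"
  by (cases "m \<le> p") (simp_all add: coeff_linear_poly_power coeff_eq_0 degree_linear_power)

lemma of_nat_choose_falling: "real (K choose r) = (\<Prod>i<r. real K - real i) / fact r"
  by (simp add: binomial_gbinomial gbinomial_prod_rev atLeast0LessThan)

lemma choose_near_top:
  shows "m = p \<Longrightarrow> real (p choose m) = 1"
    and "m + 1 = p \<Longrightarrow> real (p choose m) = real p"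
    and "m + 2 = p \<Longrightarrow> real (p choose m) = real p * (real p - 1) / 2"
    and "m + 3 = p \<Longrightarrow> real (p choose m) = real p * (real p - 1) * (real p - 2) / 6"
    and "m + 4 = p \<Longrightarrow> real (p choose m) = real p * (real p - 1) * (real p - 2) * (real p - 3) / 24"
    and "m + 5 = p \<Longrightarrow>
      real (p choose m) = real p * (real p - 1) * (real p - 2) * (real p - 3) * (real p - 4) / 120"
  by (auto simp: binomial_symmetric[of m p] of_nat_choose_falling numeral_eq_Suc lessThan_Suc fact_numeral)

lemma coeff_pcompose_shifted_square:
  "coeff (pcompose F ([:a, 1:] ^ 2)) m = (\<Sum>i\<le>degree F. coeff F i * (real (2 * i choose m) * a ^ (2 * i - m)))"
proof -
  have "pcompose F ([:a, 1:] ^ 2) = (\<Sum>i\<le>degree F. smult (coeff F i) ([:a, 1:] ^ (2 * i)))"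
    by (subst (1) poly_as_sum_of_monoms[of F, symmetric])
      (simp add: pcompose_sum pcompose_monom power_mult)
  then show ?thesis by (simp add: coeff_sum coeff_linear_power_choose)
qed

lemma top_coeffs_pcompose_shifted_square:
  fixes F :: "real poly" and a :: real
  assumes deg: "degree F = K" and "3 \<le> K"
  defines "Q \<equiv> pcompose F ([:a, 1:] ^ 2)" and "n \<equiv> real (2 * K)"
    and "f0 \<equiv> coeff F K" and "f1 \<equiv> coeff F (K - 1)" and "f2 \<equiv> coeff F (K - 2)"
  shows "coeff Q (2 * K) = f0"
    and "coeff Q (2 * K - 1) = n * a * f0"
    and "coeff Q (2 * K - 2) = n * (n - 1) / 2 * a ^ 2 * f0 + f1"
    and "coeff Q (2 * K - 3) = n * (n - 1) * (n - 2) / 6 * a ^ 3 * f0 + (n - 2) * a * f1"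
    and "coeff Q (2 * K - 4) = n * (n - 1) * (n - 2) * (n - 3) / 24 * a ^ 4 * f0
           + (n - 2) * (n - 3) / 2 * a ^ 2 * f1 + f2"
    and "coeff Q (2 * K - 5) = n * (n - 1) * (n - 2) * (n - 3) * (n - 4) / 120 * a ^ 5 * f0
           + (n - 2) * (n - 3) * (n - 4) / 6 * a ^ 3 * f1 + (n - 4) * a * f2"
proof -
  obtain k where K: "K = k + 3" using \<open>3 \<le> K\<close> by (metis add.commute le_Suc_ex)
  define g where "g j i = coeff F i * (real (2 * i choose (2 * k + j)) * a ^ (2 * i - (2 * k + j)))" for j i
  have top: "coeff Q (2 * k + j) = g j (k + 1) + g j (k + 2) + g j (k + 3)" if "1 \<le> j" for j
  proof -
    have "coeff Q (2 * k + j) = (\<Sum>i\<le>k + 3. g j i)"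
      by (simp add: Q_def coeff_pcompose_shifted_square deg K g_def)
    also have "\<dots> = (\<Sum>i<k + 1. g j i) + g j (k + 1) + g j (k + 2) + g j (k + 3)"
      by (simp add: numeral_eq_Suc sum.lessThan_Suc lessThan_Suc_atMost[symmetric] add.assoc)
    also have "(\<Sum>i<k + 1. g j i) = 0"
      using that by (intro sum.neutral) (auto simp: g_def binomial_eq_0)
    finally show ?thesis by simp
  qed
  have f: "f0 = coeff F (k + 3)" "f1 = coeff F (k + 2)" "f2 = coeff F (k + 1)"
    by (simp_all add: f0_def f1_def f2_def K)
  have n: "n = 2 * real k + 6" by (simp add: n_def K)
  note choose = choose_near_top binomial_eq_0
  show "coeff Q (2 * K) = f0"
    using top[of 6] by (simp add: K g_def f choose)
  show "coeff Q (2 * K - 1) = n * a * f0"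
    using top[of 5] by (simp add: K g_def f n choose algebra_simps)
  show "coeff Q (2 * K - 2) = n * (n - 1) / 2 * a ^ 2 * f0 + f1"
    using top[of 4] by (simp add: K g_def f n choose field_simps)
  show "coeff Q (2 * K - 3) = n * (n - 1) * (n - 2) / 6 * a ^ 3 * f0 + (n - 2) * a * f1"
    using top[of 3] by (simp add: K g_def f n choose field_simps)
  show "coeff Q (2 * K - 4) = n * (n - 1) * (n - 2) * (n - 3) / 24 * a ^ 4 * f0
           + (n - 2) * (n - 3) / 2 * a ^ 2 * f1 + f2"
    using top[of 2] by (simp add: K g_def f n choose field_simps)
  show "coeff Q (2 * K - 5) = n * (n - 1) * (n - 2) * (n - 3) * (n - 4) / 120 * a ^ 5 * f0
           + (n - 2) * (n - 3) * (n - 4) / 6 * a ^ 3 * f1 + (n - 4) * a * f2"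
    using top[of 1] by (simp add: K g_def f n choose field_simps)
qed

section \<open>Elimination of the lower coefficients of \<open>F\<close>\<close>

lemma first_relations_solved:
  fixes n a f0 f1 :: real
  assumes "f0 \<noteq> 0" and "6 \<le> n"
    and q2: "n * (n - 1) / 2 * a ^ 2 * f0 + f1 = - n / 4 * f0"
    and q3: "n * (n - 1) * (n - 2) / 6 * a ^ 3 * f0 + (n - 2) * a * f1 = - (n - 1) / 4 * (n * a * f0)"
  shows "a = 0 \<or> (2 * a) ^ 2 = 3 / ((n - 1) * (n - 2))"
proof -
  have f1: "f1 = - n / 4 * f0 - n * (n - 1) / 2 * a ^ 2 * f0"
    using q2 by (simp add: algebra_simps)
  have "n * a * f0 * (3 - 4 * (n - 1) * (n - 2) * a ^ 2) = 0"
    using q3 unfolding f1 by (simp add: field_simps power2_eq_square power3_eq_cube)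
  then have "a = 0 \<or> 4 * (n - 1) * (n - 2) * a ^ 2 = 3"
    using assms(1,2) by simp
  moreover have "(n - 1) * (n - 2) \<noteq> 0" using assms(2) by simp
  ultimately show ?thesis by (auto simp: field_simps power_mult_distrib)
qed

text \<open>The relations coming from \<open>Ch_2 = Ch_4 = Ch_5 = 0\<close>; after eliminating \<open>f_1, f_2\<close> the
  last one equals \<open>n a f_0 T / 16\<close> with \<open>T\<close> the quartic of the claim.\<close>
lemma second_relations_solved:
  fixes n a f0 f1 f2 :: real
  assumes "f0 \<noteq> 0" and "6 \<le> n"
    and q2: "n * (n - 1) / 2 * a ^ 2 * f0 + f1 = - n / 4 * f0"
    and q4: "n * (n - 1) * (n - 2) * (n - 3) / 24 * a ^ 4 * f0 + (n - 2) * (n - 3) / 2 * a ^ 2 * f1 + f2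
           = n * (n - 3) / 32 * f0"
    and q5: "n * (n - 1) * (n - 2) * (n - 3) * (n - 4) / 120 * a ^ 5 * f0
           + (n - 2) * (n - 3) * (n - 4) / 6 * a ^ 3 * f1 + (n - 4) * a * f2
         = - (n - 3) / 4 * (n * (n - 1) * (n - 2) / 6 * a ^ 3 * f0 + (n - 2) * a * f1)
           - (n - 1) * (n - 2) / 32 * (n * a * f0)"
  shows "a = 0 \<or>
    2 / 15 * (n - 1) * (n - 2) * (n - 3) * (n - 4) * (2 * a) ^ 4 - (n - 2) * (n - 3) * (2 * a) ^ 2 + 1 = 0"
proof -
  define T where "T = 2 / 15 * (n - 1) * (n - 2) * (n - 3) * (n - 4) * (2 * a) ^ 4
    - (n - 2) * (n - 3) * (2 * a) ^ 2 + 1"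
  have f1: "f1 = - n / 4 * f0 - n * (n - 1) / 2 * a ^ 2 * f0"
    using q2 by (simp add: algebra_simps)
  have f2: "f2 = n * (n - 3) / 32 * f0 - n * (n - 1) * (n - 2) * (n - 3) / 24 * a ^ 4 * f0
      - (n - 2) * (n - 3) / 2 * a ^ 2 * f1"
    using q4 by (simp add: algebra_simps)
  have "n * a * f0 * T = 0"
    using q5 unfolding f2 f1 T_def by (simp add: field_simps power_numeral_reduce)
  then show ?thesis using assms(1,2) unfolding T_def by simp
qed

theorem lemma3p4:
  fixes F :: "real poly" and \<delta> :: real and Q :: "real poly" and n :: nat
  assumes hQ: "Q = pcompose F (pcompose [:0, 0, 1:] [:-\<delta>, 1:])"
    and hn: "n = degree Q" and n6: "n \<ge> 6"
  shows "(Ch 2 Q = 0 \<and> Ch 3 Q = 0 \<longrightarrow>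
            \<delta> = 0 \<or> (2 * \<delta>)^2 = 3 / ((real n - 1) * (real n - 2)))
       \<and> (Ch 2 Q = 0 \<and> Ch 4 Q = 0 \<and> Ch 5 Q = 0 \<longrightarrow>
            \<delta> = 0 \<or> (let t = 2 * \<delta> in
              2 / 15 * (real n - 1) * (real n - 2) * (real n - 3) * (real n - 4) * t^4
              - (real n - 2) * (real n - 3) * t^2 + 1 = 0))"
proof -
  have Q: "Q = pcompose F ([:- \<delta>, 1:] ^ 2)"
    using hQ by (simp add: pcompose_pCons power2_eq_square)
  have n: "n = 2 * degree F"
    using hn by (simp add: Q degree_pcompose degree_linear_power)
  have "3 \<le> degree F" using n n6 by linarith
  then have f0: "coeff F (degree F) \<noteq> 0" by auto
  note q = top_coeffs_pcompose_shifted_square[OF refl \<open>3 \<le> degree F\<close>, of "- \<delta>",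
      folded Q n]
  note rel = top_coeff_relations[OF hn[symmetric] n6]
  have "6 \<le> real n" using n6 by simp
  show ?thesis
  proof (intro conjI impI)
    assume "Ch 2 Q = 0 \<and> Ch 3 Q = 0"
    then have Ch: "Ch 2 Q = 0" "Ch 3 Q = 0" by auto
    from first_relations_solved[OF f0 \<open>6 \<le> real n\<close>
        rel(1)[OF Ch(1), unfolded q] rel(2)[OF Ch(2), unfolded q]]
    show "\<delta> = 0 \<or> (2 * \<delta>)^2 = 3 / ((real n - 1) * (real n - 2))" by simp
  next
    assume "Ch 2 Q = 0 \<and> Ch 4 Q = 0 \<and> Ch 5 Q = 0"
    then have Ch: "Ch 2 Q = 0" "Ch 4 Q = 0" "Ch 5 Q = 0" by auto
    from second_relations_solved[OF f0 \<open>6 \<le> real n\<close>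
        rel(1)[OF Ch(1), unfolded q] rel(3)[OF Ch(1,2), unfolded q] rel(4)[OF Ch(3), unfolded q]]
    show "\<delta> = 0 \<or> (let t = 2 * \<delta> in
              2 / 15 * (real n - 1) * (real n - 2) * (real n - 3) * (real n - 4) * t^4
              - (real n - 2) * (real n - 3) * t^2 + 1 = 0)" by (simp add: Let_def)
  qed
qed

end
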